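(* Let $\mathcal{A}$ be a CA of radius $r$ over alphabet $Q$. If $w$ is the foot of a wall of $\mathcal{A}$ having some brick of length at least $r$, then for every word $u\in Q^*$ there exists a wall of $\mathcal{A}$ whose foot is $wuw$ and which has bricks of length at least $|u|$.
   Context: A one-dimensional cellular automaton (CA) $\mathcal{A}$ is given by a finite alphabet $Q$, a radius $r\ge 0$ and a local rule $\delta:Q^{2r+1}\to Q$; it acts on configurations $c\in Q^{\mathbb{Z}}$ by $\mathcal{A}(c)_i=\delta(c_{i-r},\dots,c_{i+r})$. For $u\in Q^*$, $i\in\mathbb{Z}$, $[u]_i=\{c\in Q^{\mathbb{Z}}: c_i\cdots c_{i+|u|-1}=u\}$. Walls: for $u\in Q^*$ let $\langle u\rangle=[u]_{-|u|/2}$ if $|u|$ is even and $\langle u\rangle=[u]_{-(|u|+1)/2}$ if $|u|$ is odd. A wall for $\mathcal{A}$ is a sequence $(w_n)_{n\ge0}$ of nonempty words over $Q$ such that (1) for every $c\in\langle w_0\rangle$ and every $n\ge1$, $\mathcal{A}^n(c)\in\langle w_n\rangle$, and (2) the sequence $(|w_n|)_{n\ge0}$ is non-increasing. The word $w_0$ is the foot of the wall. A word $w$ is a brick of the wall $(w_n)$ if there are integers $p\ge1$, $n_0\ge0$ with $w_{pn+n_0}=w$ for all $n\ge0$. *)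

theory Defs
  imports Main
begin

definition ca_global :: "('q list \<Rightarrow> 'q) \<Rightarrow> nat \<Rightarrow> (int \<Rightarrow> 'q) \<Rightarrow> (int \<Rightarrow> 'q)" where
  "ca_global delta r c = (\<lambda>i. delta (map (\<lambda>j. c (i - int r + int j)) [0..<2*r+1]))"

definition cyl :: "'q list \<Rightarrow> int \<Rightarrow> (int \<Rightarrow> 'q) set" where
  "cyl u i = {c. \<forall>k<length u. c (i + int k) = u ! k}"

definition ccyl :: "'q list \<Rightarrow> (int \<Rightarrow> 'q) set" where
  "ccyl u = (if even (length u) then cyl u (- (int (length u) div 2))
             else cyl u (- ((int (length u) + 1) div 2)))"

definition is_wall :: "('q list \<Rightarrow> 'q) \<Rightarrow> nat \<Rightarrow> (nat \<Rightarrow> 'q list) \<Rightarrow> bool" where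
  "is_wall delta r w \<longleftrightarrow>
     (\<forall>n. w n \<noteq> []) \<and>
     (\<forall>c\<in>ccyl (w 0). \<forall>n\<ge>1. (ca_global delta r ^^ n) c \<in> ccyl (w n)) \<and>
     (\<forall>m n. m \<le> n \<longrightarrow> length (w n) \<le> length (w m))"

definition is_brick :: "(nat \<Rightarrow> 'q list) \<Rightarrow> 'q list \<Rightarrow> bool" where
  "is_brick w b \<longleftrightarrow> (\<exists>p n0. p \<ge> 1 \<and> (\<forall>n. w (p * n + n0) = b))"

end

theory Submission
  imports Defs
begin

(* The two copies of w in the foot w u w travel as walls, and every word of the wall has length
   at least r because the long brick recurs. Hence a cell strictly between the two copies only
   ever sees cells of the segment spanned by them one step earlier, so by induction on time this
   whole segment is determined by the foot alone. A centred window inside it therefore defines a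
   wall with foot w u w; computing it on the (w u w)-periodic configuration, whose orbit is
   eventually periodic because there are only finitely many such configurations, gives a
   recurring brick. *)

definition half_up :: "nat \<Rightarrow> int" where
  "half_up n = (int n + 1) div 2"

lemma ccyl_eq_cyl: "ccyl u = cyl u (- half_up (length u))"
  unfolding ccyl_def half_up_def by (auto elim: evenE)

definition centred_window :: "nat \<Rightarrow> (int \<Rightarrow> 'q) \<Rightarrow> 'q list" where
  "centred_window K c = map (\<lambda>j. c (- half_up K + int j)) [0..<K]"

lemma length_centred_window [simp]: "length (centred_window K c) = K"
  by (simp add: centred_window_def)

lemma ccyl_iff_centred_window: "c \<in> ccyl u \<longleftrightarrow> centred_window (length u) c = u"
  unfolding ccyl_eq_cyl cyl_def centred_window_def list_eq_iff_nth_eq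
  by simp

lemma cyl_append_iff:
  "c \<in> cyl (x @ y) a \<longleftrightarrow> c \<in> cyl x a \<and> c \<in> cyl y (a + int (length x))"
  unfolding cyl_def mem_Collect_eq
proof safe
  fix k assume "\<forall>k<length (x @ y). c (a + int k) = (x @ y) ! k" "k < length x"
  then show "c (a + int k) = x ! k" by (auto simp: nth_append)
next
  fix k assume "\<forall>k<length (x @ y). c (a + int k) = (x @ y) ! k" "k < length y"
  then show "c (a + int (length x) + int k) = y ! k"
    by (auto simp: nth_append add.assoc dest: spec[of _ "length x + k"])
next
  fix k assume x: "\<forall>k<length x. c (a + int k) = x ! k"
    and y: "\<forall>k<length y. c (a + int (length x) + int k) = y ! k" and k: "k < length (x @ y)"
  show "c (a + int k) = (x @ y) ! k"
  proof (cases "k < length x")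
    case True
    then show ?thesis using x by (simp add: nth_append)
  next
    case False
    then show ?thesis using y k by (auto simp: nth_append dest: spec[of _ "k - length x"])
  qed
qed

lemma cyl_agree:
  assumes "c \<in> cyl u a" "c' \<in> cyl u a" "a \<le> i" "i < a + int (length u)"
  shows "c i = c' i"
proof -
  define k where "k = nat (i - a)"
  have "k < length u" "i = a + int k" using assms(3,4) by (auto simp: k_def)
  then show ?thesis using assms(1,2) unfolding cyl_def by simp
qed

definition shift :: "int \<Rightarrow> (int \<Rightarrow> 'q) \<Rightarrow> int \<Rightarrow> 'q" where
  "shift t c = (\<lambda>i. c (i + t))"

lemma ca_global_shift: "ca_global d r (shift t c) = shift t (ca_global d r c)"
  unfolding ca_global_def shift_def by (simp add: fun_eq_iff algebra_simps)

lemma funpow_ca_global_shift: "(ca_global d r ^^ n) (shift t c) = shift t ((ca_global d r ^^ n) c)"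
  by (induction n) (simp_all add: ca_global_shift)

lemma shift_in_cyl_iff: "shift t c \<in> cyl u i \<longleftrightarrow> c \<in> cyl u (i + t)"
  unfolding cyl_def shift_def by (simp add: algebra_simps)

lemma ca_global_local:
  assumes "\<And>j. i - int r \<le> j \<Longrightarrow> j \<le> i + int r \<Longrightarrow> c j = c' j"
  shows "ca_global d r c i = ca_global d r c' i"
  unfolding ca_global_def using assms by (auto intro!: arg_cong[where f = d])

definition wall_offset :: "(nat \<Rightarrow> 'q list) \<Rightarrow> int \<Rightarrow> nat \<Rightarrow> int" where
  "wall_offset w a n = a + half_up (length (w 0)) - half_up (length (w n))"

lemma wall_in_cyl:
  assumes "is_wall d r w" "c \<in> cyl (w 0) a"
  shows "(ca_global d r ^^ n) c \<in> cyl (w n) (wall_offset w a n)"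
proof (cases "n = 0")
  case True
  then show ?thesis using assms(2) by (simp add: wall_offset_def)
next
  case False
  define t where "t = a + half_up (length (w 0))"
  have "shift t c \<in> ccyl (w 0)"
    using assms(2) by (simp add: ccyl_eq_cyl shift_in_cyl_iff t_def)
  then have "(ca_global d r ^^ n) (shift t c) \<in> ccyl (w n)"
    using assms(1) False unfolding is_wall_def by auto
  moreover have "- half_up (length (w n)) + t = wall_offset w a n"
    by (simp add: wall_offset_def t_def)
  ultimately show ?thesis
    by (simp only: funpow_ca_global_shift ccyl_eq_cyl shift_in_cyl_iff)
qed

lemma wall_length_antimono: "is_wall d r w \<Longrightarrow> m \<le> n \<Longrightarrow> length (w n) \<le> length (w m)"
  by (simp add: is_wall_def)

lemma wall_offset_mono:
  assumes "is_wall d r w" "m \<le> n"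
  shows "wall_offset w a m \<le> wall_offset w a n"
  using wall_length_antimono[OF assms] unfolding wall_offset_def half_up_def
  by (simp add: zdiv_mono1)

lemma wall_end_antimono:
  assumes "is_wall d r w" "m \<le> n"
  shows "wall_offset w a n + int (length (w n)) \<le> wall_offset w a m + int (length (w m))"
  using wall_length_antimono[OF assms] unfolding wall_offset_def half_up_def
  by presburger

lemma wall_nonempty: "is_wall d r w \<Longrightarrow> w n \<noteq> []"
  by (simp add: is_wall_def)

lemma brick_length_le_wall_length:
  assumes "is_wall d r w" "is_brick w b"
  shows "length b \<le> length (w n)"
proof -
  obtain p n0 where "1 \<le> p" and brick: "\<And>j. w (p * j + n0) = b"
    using assms(2) unfolding is_brick_def by blast
  then have "n \<le> p * n + n0" by (simp add: trans_le_add1)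
  then show ?thesis using wall_length_antimono[OF assms(1)] brick by metis
qed

lemma ca_agree_between_walls:
  assumes wl: "is_wall d r wl" and wr: "is_wall d r wr"
    and long: "\<And>n. r \<le> length (wl n)" "\<And>n. r \<le> length (wr n)"
    and c: "c \<in> cyl (wl 0) a" "c \<in> cyl (wr 0) b"
    and c': "c' \<in> cyl (wl 0) a" "c' \<in> cyl (wr 0) b"
    and agree: "\<And>i. a \<le> i \<Longrightarrow> i < b + int (length (wr 0)) \<Longrightarrow> c i = c' i"
  shows "wall_offset wl a n \<le> i \<Longrightarrow> i < wall_offset wr b n + int (length (wr n)) \<Longrightarrow>
    (ca_global d r ^^ n) c i = (ca_global d r ^^ n) c' i"
proof (induction n arbitrary: i)
  case 0
  then show ?case using agree by (simp add: wall_offset_def)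
next
  case (Suc n)
  let ?F = "ca_global d r"
  consider (left) "i < wall_offset wl a (Suc n) + int (length (wl (Suc n)))"
    | (right) "wall_offset wr b (Suc n) \<le> i"
    | (middle) "wall_offset wl a (Suc n) + int (length (wl (Suc n))) \<le> i"
        "i < wall_offset wr b (Suc n)"
    by linarith
  then show ?case
  proof cases
    case left
    then show ?thesis
      using Suc.prems cyl_agree wall_in_cyl[OF wl c(1)] wall_in_cyl[OF wl c'(1)] by blast
  next
    case right
    then show ?thesis
      using Suc.prems cyl_agree wall_in_cyl[OF wr c(2)] wall_in_cyl[OF wr c'(2)] by blast
  next
    case middle
    \<comment> \<open>walls are at least r wide, so the neighbourhood of i
      lies in the previous segment\<close>
    have "?F ((?F ^^ n) c) i = ?F ((?F ^^ n) c') i"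
    proof (rule ca_global_local)
      fix j assume "i - int r \<le> j" "j \<le> i + int r"
      moreover have "wall_offset wl a n \<le> wall_offset wl a (Suc n)"
        using wall_offset_mono[OF wl] by simp
      moreover have "wall_offset wr b (Suc n) + int (length (wr (Suc n))) \<le>
          wall_offset wr b n + int (length (wr n))"
        using wall_end_antimono[OF wr] by simp
      ultimately show "(?F ^^ n) c j = (?F ^^ n) c' j"
        using middle long[of "Suc n"] by (intro Suc.IH) linarith+
    qed
    then show ?thesis by simp
  qed
qed

lemma shift_periodic_add_mult:
  assumes "shift p c = c"
  shows "c (i + z * p) = c i"
proof (induction z arbitrary: i rule: int_induct[where k = 0])
  case base
  then show ?case by simp
next
  case (step1 z)
  have "c (i + (z + 1) * p) = c ((i + p) + z * p)" by (simp add: algebra_simps)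
  also have "\<dots> = c i" using step1.IH assms by (simp add: shift_def fun_eq_iff)
  finally show ?case .
next
  case (step2 z)
  have "c (i + (z - 1) * p) = c ((i - p) + z * p)" by (simp add: algebra_simps)
  also have "\<dots> = c (i - p + p)" using step2.IH assms by (metis shift_def)
  finally show ?case by simp
qed

lemma shift_periodic_mod: "shift p c = c \<Longrightarrow> c (i mod p) = c i"
  using shift_periodic_add_mult[of p c "i mod p" "i div p"] by simp

lemma finite_shift_periodic:
  assumes "0 < W"
  shows "finite {c :: int \<Rightarrow> 'q::finite. shift (int W) c = c}"
proof -
  let ?P = "{c :: int \<Rightarrow> 'q. shift (int W) c = c}"
  let ?period = "\<lambda>c :: int \<Rightarrow> 'q. map (\<lambda>j. c (int j)) [0..<W]"
  have "inj_on ?period ?P"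
  proof (rule inj_onI)
    fix c c' assume "c \<in> ?P" "c' \<in> ?P" and eq: "?period c = ?period c'"
    show "c = c'"
    proof
      fix i
      define k where "k = nat (i mod int W)"
      have "k < W" "int k = i mod int W" using assms by (auto simp: k_def nat_less_iff)
      then have "c (i mod int W) = c' (i mod int W)"
        using arg_cong[OF eq, of "\<lambda>xs. xs ! k"] by simp
      then show "c i = c' i"
        using \<open>c \<in> ?P\<close> \<open>c' \<in> ?P\<close> by (simp add: shift_periodic_mod)
    qed
  qed
  moreover have "?period ` ?P \<subseteq> {xs. length xs = W}" by auto
  ultimately show ?thesis
    using finite_lists_length_eq[of "UNIV :: 'q set" W] by (simp add: inj_on_finite)
qed

lemma periodic_orbit_repeats:
  fixes c :: "int \<Rightarrow> 'q::finite"
  assumes "shift (int W) c = c" "0 < W"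
  obtains a b where "a < b" "(ca_global d r ^^ a) c = (ca_global d r ^^ b) c"
proof -
  let ?orbit = "\<lambda>n. (ca_global d r ^^ n) c"
  have "range ?orbit \<subseteq> {c. shift (int W) c = c}"
    using assms(1) by (auto simp: funpow_ca_global_shift[symmetric])
  then have "finite (range ?orbit)"
    using finite_shift_periodic[OF assms(2)] by (rule finite_subset)
  then have "\<not> inj ?orbit" using finite_imageD by blast
  then obtain a b where "a \<noteq> b" "?orbit a = ?orbit b" unfolding inj_def by blast
  then show ?thesis using that by (metis linorder_neqE_nat)
qed

definition periodic_ext :: "'q list \<Rightarrow> int \<Rightarrow> int \<Rightarrow> 'q" where
  "periodic_ext v p i = v ! nat ((i - p) mod int (length v))"

lemma periodic_ext_in_cyl: "v \<noteq> [] \<Longrightarrow> periodic_ext v p \<in> cyl v p"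
  by (simp add: periodic_ext_def cyl_def)

lemma shift_periodic_ext: "shift (int (length v)) (periodic_ext v p) = periodic_ext v p"
proof -
  have "(i + int (length v) - p) mod int (length v) = (i - p) mod int (length v)" for i
    using mod_add_self2[of "i - p" "int (length v)"] by (simp add: algebra_simps)
  then show ?thesis by (simp add: periodic_ext_def shift_def fun_eq_iff)
qed

lemma funpow_cycle:
  fixes f :: "'a \<Rightarrow> 'a"
  assumes "a < b" "(f ^^ a) x = (f ^^ b) x" "a \<le> n"
  shows "(f ^^ (n + (b - a))) x = (f ^^ n) x"
proof -
  have "n + (b - a) = (n - a) + b" using assms(1,3) by simp
  then have "(f ^^ (n + (b - a))) x = (f ^^ (n - a)) ((f ^^ b) x)"
    by (simp add: funpow_add)
  also have "\<dots> = (f ^^ (n - a + a)) x"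
    by (simp only: assms(2) funpow_add comp_apply)
  also have "\<dots> = (f ^^ n) x"
    using assms(3) by simp
  finally show ?thesis .
qed

lemma is_brick_if_eventually_periodic:
  assumes "1 \<le> p" "\<And>n. n0 \<le> n \<Longrightarrow> s (n + p) = s n"
  shows "is_brick s (s n0)"
  unfolding is_brick_def
proof (intro exI conjI allI)
  fix j
  show "s (p * j + n0) = s n0"
  proof (induction j)
    case (Suc j)
    have "s (p * Suc j + n0) = s ((p * j + n0) + p)" by (simp add: algebra_simps)
    also have "\<dots> = s (p * j + n0)" using assms(2) by simp
    finally show ?case using Suc.IH by simp
  qed simp
qed (fact assms(1))

(* m = |w 0|, k = |u|, l = |w n|, and a is the start of the foot w u w *)
lemma centred_window_within_walls:
  fixes m k l j :: nat
  defines "a \<equiv> - half_up (m + k + m)"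
  defines "K \<equiv> max k 1"
  assumes "1 \<le> l" "j < K"
  shows "a + half_up m - half_up l \<le> - half_up K + int j"
    and "- half_up K + int j < (a + int m + int k) + half_up m - half_up l + int l"
  using assms unfolding half_up_def by (auto simp: max_def) presburger+

lemma centred_window_determined:
  assumes wall: "is_wall d r w" and long: "\<And>n. r \<le> length (w n)"
    and c: "c \<in> ccyl (w 0 @ u @ w 0)" and c': "c' \<in> ccyl (w 0 @ u @ w 0)"
  shows "centred_window (max (length u) 1) ((ca_global d r ^^ n) c) =
    centred_window (max (length u) 1) ((ca_global d r ^^ n) c')"
proof -
  define v where "v = w 0 @ u @ w 0"
  define a where "a = - half_up (length v)"
  define b where "b = a + int (length (w 0)) + int (length u)"
  have feet: "x \<in> cyl (w 0) a" "x \<in> cyl (w 0) b" if "x \<in> cyl v a" for x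
    using that by (simp_all add: v_def b_def cyl_append_iff add.assoc)
  have "c \<in> cyl v a" "c' \<in> cyl v a" using c c' by (simp_all add: ccyl_eq_cyl v_def a_def)
  moreover have "int (length v) = b - a + int (length (w 0))" by (simp add: v_def b_def)
  ultimately have agree: "c i = c' i" if "a \<le> i" "i < b + int (length (w 0))" for i
    using that by (intro cyl_agree[of c v a c']) simp_all
  have "wall_offset w a n \<le> - half_up (max (length u) 1) + int j"
    "- half_up (max (length u) 1) + int j < wall_offset w b n + int (length (w n))"
    if "j < max (length u) 1" for j
    using centred_window_within_walls[of "length (w n)" j "length u" "length (w 0)"] that
      wall_nonempty[OF wall, of n]
    by (simp_all add: wall_offset_def a_def b_def v_def Suc_le_eq add.assoc)
  then show ?thesis
    unfolding centred_window_def
    using ca_agree_between_walls[OF wall wall long long feet[OF \<open>c \<in> cyl v a\<close>]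
        feet[OF \<open>c' \<in> cyl v a\<close>] agree]
    by simp
qed

lemma is_wall_centred_windows:
  assumes "v \<noteq> []" "1 \<le> K" "K \<le> length v"
    and "\<And>c n. c \<in> ccyl v \<Longrightarrow> 1 \<le> n \<Longrightarrow>
      centred_window K ((ca_global d r ^^ n) c) = centred_window K ((ca_global d r ^^ n) c0)"
  shows "is_wall d r (\<lambda>n. if n = 0 then v else centred_window K ((ca_global d r ^^ n) c0))"
  unfolding is_wall_def
  using assms by (auto simp: ccyl_iff_centred_window dest: arg_cong[of _ _ length])

lemma is_brick_centred_windows_of_cycle:
  fixes f :: "(int \<Rightarrow> 'q) \<Rightarrow> int \<Rightarrow> 'q"
  assumes "a < b" "(f ^^ a) x = (f ^^ b) x"
  shows "is_brick (\<lambda>n. if n = 0 then v else centred_window K ((f ^^ n) x))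
    (centred_window K ((f ^^ Suc a) x))"
proof -
  let ?s = "\<lambda>n. if n = 0 then v else centred_window K ((f ^^ n) x)"
  have "?s (n + (b - a)) = ?s n" if "Suc a \<le> n" for n
    using funpow_cycle[OF assms, of n] that by simp
  then show ?thesis
    using is_brick_if_eventually_periodic[of "b - a" "Suc a" ?s] assms(1) by simp
qed

theorem mainTheorem3:
  fixes delta :: "'q::finite list \<Rightarrow> 'q" and r :: nat and w :: "nat \<Rightarrow> 'q list"
  assumes "is_wall delta r w"
    and "\<exists>b. is_brick w b \<and> length b \<ge> r"
  shows "\<forall>u. \<exists>w'. is_wall delta r w' \<and> w' 0 = w 0 @ u @ w 0 \<and>
           (\<exists>b. is_brick w' b \<and> length b \<ge> length u)"
proof
  fix u :: "'q list"
  let ?F = "ca_global delta r"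
  define v where "v = w 0 @ u @ w 0"
  define K where "K = max (length u) 1"
    \<comment> \<open>positive, so that the words stay nonempty if u = []\<close>
  define c0 where "c0 = periodic_ext v (- half_up (length v))"
  define w' where "w' n = (if n = 0 then v else centred_window K ((?F ^^ n) c0))" for n
  have long: "r \<le> length (w n)" for n
    using assms brick_length_le_wall_length order_trans by blast
  have "v \<noteq> []" using wall_nonempty[OF assms(1)] by (simp add: v_def)
  then have c0: "c0 \<in> ccyl v" by (simp add: c0_def ccyl_eq_cyl periodic_ext_in_cyl)
  obtain a b where cycle: "a < b" "(?F ^^ a) c0 = (?F ^^ b) c0"
    using periodic_orbit_repeats shift_periodic_ext \<open>v \<noteq> []\<close> unfolding c0_def by blast
  have "is_wall delta r w'"
    unfolding w'_def
  proof (rule is_wall_centred_windows)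
    show "1 \<le> K" "K \<le> length v"
      using wall_nonempty[OF assms(1), of 0] by (auto simp: K_def v_def Suc_le_eq)
    show "centred_window K ((?F ^^ n) c) = centred_window K ((?F ^^ n) c0)"
      if "c \<in> ccyl v" for c n
      using centred_window_determined[OF assms(1) long, of c u c0] that c0
      by (simp add: K_def v_def)
  qed fact
  moreover have "w' 0 = w 0 @ u @ w 0" by (simp add: w'_def v_def)
  moreover have "is_brick w' (centred_window K ((?F ^^ Suc a) c0))"
    unfolding w'_def by (rule is_brick_centred_windows_of_cycle[OF cycle])
  moreover have "length u \<le> length (centred_window K ((?F ^^ Suc a) c0))" by (simp add: K_def)
  ultimately show "\<exists>w'. is_wall delta r w' \<and> w' 0 = w 0 @ u @ w 0 \<and>
      (\<exists>b. is_brick w' b \<and> length b \<ge> length u)"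
    by blast
qed

end
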